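(* Let $(F,\phi)$ be an extended representation graph for $E$, let $w$ be a source in $F$, and let $p,q$ be paths in $F$ (of length $\ge0$) with source $w$. Then $r(p)=r(q)$ if and only if $p=q$.
   Context: $E$ is a row-finite directed graph with, for each vertex $v$ emitting an edge, a chosen special edge $e^v\in s^{-1}(v)$; other edges are nonspecial. The double graph $E_d$ has vertices $E^0$ and edges $e$ (real) and $e^*$ (ghost) for $e\in E^1$, with $s_d(e)=s(e),r_d(e)=r(e),s_d(e^* )=r(e),r_d(e^* )=s(e)$. Paths of length $0$ are vertices $w$ with $s(w)=r(w)=w$. An extended representation graph for $E$ is a pair $(F,\phi)$, $F$ a directed graph, $\phi:F\to E_d$ a graph homomorphism, such that for every $w\in F^0$: (i) $w$ is a source (receives no edge) or receives exactly one edge $f_w$; (ii) if $w$ is a source or $\phi(f_w)$ is a nonspecial real edge, $\phi$ maps $s^{-1}(w)$ bijectively onto $s_d^{-1}(\phi(w))$; (iii) if $\phi(f_w)$ is a special real edge, onto $s_d^{-1}(\phi(w))\setminus\{\phi(f_w)^*\}$; (iv) if $\phi(f_w)$ is a ghost edge, onto the ghost edges in $s_d^{-1}(\phi(w))$. *)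

theory Defs
  imports Main
begin

record ('v, 'e) dgraph =
  verts :: "'v set"
  arcs  :: "'e set"
  src   :: "'e \<Rightarrow> 'v"
  rng   :: "'e \<Rightarrow> 'v"

definition wf_graph :: "('v, 'e) dgraph \<Rightarrow> bool" where
  "wf_graph G \<longleftrightarrow> (\<forall>e\<in>arcs G. src G e \<in> verts G \<and> rng G e \<in> verts G)"

definition out_arcs :: "('v, 'e) dgraph \<Rightarrow> 'v \<Rightarrow> 'e set" where
  "out_arcs G v = {e \<in> arcs G. src G e = v}"

definition row_finite :: "('v, 'e) dgraph \<Rightarrow> bool" where
  "row_finite G \<longleftrightarrow> (\<forall>v\<in>verts G. finite (out_arcs G v))"

definition is_source :: "('v, 'e) dgraph \<Rightarrow> 'v \<Rightarrow> bool" where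
  "is_source G v \<longleftrightarrow> (\<forall>e\<in>arcs G. rng G e \<noteq> v)"

definition special_choice :: "('v, 'e) dgraph \<Rightarrow> ('v \<Rightarrow> 'e) \<Rightarrow> bool" where
  "special_choice G sp \<longleftrightarrow>
     (\<forall>v\<in>verts G. out_arcs G v \<noteq> {} \<longrightarrow> sp v \<in> out_arcs G v)"

datatype 'e dedge = Real 'e | Ghost 'e

definition double_graph :: "('v, 'e) dgraph \<Rightarrow> ('v, 'e dedge) dgraph" where
  "double_graph G = \<lparr> verts = verts G,
     arcs = Real ` arcs G \<union> Ghost ` arcs G,
     src = (\<lambda>x. case x of Real e \<Rightarrow> src G e | Ghost e \<Rightarrow> rng G e),
     rng = (\<lambda>x. case x of Real e \<Rightarrow> rng G e | Ghost e \<Rightarrow> src G e) \<rparr>"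

definition graph_hom ::
  "('v, 'e) dgraph \<Rightarrow> ('a, 'b) dgraph \<Rightarrow> ('v \<Rightarrow> 'a) \<Rightarrow> ('e \<Rightarrow> 'b) \<Rightarrow> bool" where
  "graph_hom F G \<phi>V \<phi>E \<longleftrightarrow>
     (\<forall>v\<in>verts F. \<phi>V v \<in> verts G) \<and>
     (\<forall>f\<in>arcs F. \<phi>E f \<in> arcs G \<and> src G (\<phi>E f) = \<phi>V (src F f) \<and> rng G (\<phi>E f) = \<phi>V (rng F f))"

definition ext_rep_graph ::
  "('a, 'b) dgraph \<Rightarrow> ('a \<Rightarrow> 'b) \<Rightarrow> ('v, 'e) dgraph \<Rightarrow> ('v \<Rightarrow> 'a) \<Rightarrow> ('e \<Rightarrow> 'b dedge) \<Rightarrow> bool" where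
  "ext_rep_graph E sp F \<phi>V \<phi>E \<longleftrightarrow>
     wf_graph F \<and> graph_hom F (double_graph E) \<phi>V \<phi>E \<and>
     (\<forall>w\<in>verts F.
        (is_source F w \<and>
           bij_betw \<phi>E (out_arcs F w) (out_arcs (double_graph E) (\<phi>V w)))
      \<or> (\<exists>f\<in>arcs F. rng F f = w \<and> (\<forall>f'\<in>arcs F. rng F f' = w \<longrightarrow> f' = f) \<and>
           (case \<phi>E f of
              Real e \<Rightarrow>
                (if e = sp (src E e)
                 then bij_betw \<phi>E (out_arcs F w) (out_arcs (double_graph E) (\<phi>V w) - {Ghost e})
                 else bij_betw \<phi>E (out_arcs F w) (out_arcs (double_graph E) (\<phi>V w)))
            | Ghost e \<Rightarrow>
                bij_betw \<phi>E (out_arcs F w)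
                  {x \<in> out_arcs (double_graph E) (\<phi>V w). \<exists>g. x = Ghost g})))"

text \<open>Paths: a pair (start vertex, edge list). Length-0 paths are (w, []).
  A nonempty path's start vertex is the source of its first edge.\<close>
definition is_path :: "('v, 'e) dgraph \<Rightarrow> 'v \<times> 'e list \<Rightarrow> bool" where
  "is_path G p \<longleftrightarrow> (case p of (w, es) \<Rightarrow>
     w \<in> verts G \<and> set es \<subseteq> arcs G \<and>
     (es \<noteq> [] \<longrightarrow> src G (hd es) = w) \<and>
     (\<forall>i. Suc i < length es \<longrightarrow> rng G (es ! i) = src G (es ! Suc i)))"

definition path_src :: "'v \<times> 'e list \<Rightarrow> 'v" where
  "path_src p = fst p"

definition path_rng :: "('v, 'e) dgraph \<Rightarrow> 'v \<times> 'e list \<Rightarrow> 'v" where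
  "path_rng G p = (if snd p = [] then fst p else rng G (last (snd p)))"

end

theory Submission
  imports Defs
begin

text \<open>Following the unique incoming edges backwards from the range of a path reconstructs the
  path, and the reconstruction stops exactly at the start vertex because that is a source.\<close>

lemma path_rng_Nil [simp]: "path_rng G (w, []) = w"
  by (simp add: path_rng_def)

lemma path_rng_snoc [simp]: "path_rng G (w, xs @ [x]) = rng G x"
  by (simp add: path_rng_def)

lemma is_path_snocD:
  assumes "is_path G (w, xs @ [x])"
  shows "is_path G (w, xs)" and "x \<in> arcs G" and "path_rng G (w, xs) = src G x"
proof -
  have chain: "rng G ((xs @ [x]) ! i) = src G ((xs @ [x]) ! Suc i)" if "Suc i < Suc (length xs)" for i
    using assms that unfolding is_path_def by auto
  show "is_path G (w, xs)"
    using assms chain unfolding is_path_def by (auto simp: nth_append split: if_splits)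
  show "x \<in> arcs G"
    using assms unfolding is_path_def by auto
  show "path_rng G (w, xs) = src G x"
  proof (cases "xs = []")
    case True
    then show ?thesis using assms unfolding is_path_def path_rng_def by simp
  next
    case False
    then show ?thesis
      using chain[of "length xs - 1"] by (simp add: path_rng_def last_conv_nth nth_append)
  qed
qed

lemma path_rng_eq_source_iff:
  assumes "is_source G w" and "is_path G (w, xs)"
  shows "path_rng G (w, xs) = w \<longleftrightarrow> xs = []"
proof (cases xs rule: rev_cases)
  case (snoc zs z)
  then show ?thesis
    using assms is_path_snocD(2)[of G w zs z] unfolding is_source_def by simp
qed simp

lemma path_from_source_eq_if_same_rng:
  assumes in_unique: "\<And>f g. f \<in> arcs G \<Longrightarrow> g \<in> arcs G \<Longrightarrow> rng G f = rng G g \<Longrightarrow> f = g"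
    and source: "is_source G w"
  shows "is_path G (w, xs) \<Longrightarrow> is_path G (w, ys) \<Longrightarrow> path_rng G (w, xs) = path_rng G (w, ys)
    \<Longrightarrow> xs = ys"
proof (induction xs arbitrary: ys rule: rev_induct)
  case Nil
  then show ?case
    using path_rng_eq_source_iff[OF source Nil.prems(2)] by simp
next
  case (snoc x xs)
  have path_x: "is_path G (w, xs @ [x])" by (fact snoc.prems(1))
  show ?case
  proof (cases ys rule: rev_cases)
    case Nil
    then show ?thesis
      using snoc.prems path_rng_eq_source_iff[OF source path_x] by simp
  next
    case (snoc ys' y)
    with snoc.prems have path_y: "is_path G (w, ys' @ [y])" and "rng G x = rng G y"
      by simp_all
    then have "x = y"
      using in_unique is_path_snocD(2)[OF path_x] is_path_snocD(2)[OF path_y] by blast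
    moreover have "xs = ys'"
      using snoc.IH is_path_snocD[OF path_x] is_path_snocD[OF path_y] \<open>x = y\<close> by simp
    ultimately show ?thesis using snoc by simp
  qed
qed

lemma ext_rep_graph_in_arc_unique:
  assumes ext: "ext_rep_graph E sp F \<phi>V \<phi>E"
    and "f \<in> arcs F" and "g \<in> arcs F" and "rng F f = rng F g"
  shows "f = g"
proof -
  have "rng F f \<in> verts F"
    using ext \<open>f \<in> arcs F\<close> unfolding ext_rep_graph_def wf_graph_def by simp
  with ext[unfolded ext_rep_graph_def, THEN conjunct2, THEN conjunct2]
  consider "is_source F (rng F f)" | h where "\<forall>f'\<in>arcs F. rng F f' = rng F f \<longrightarrow> f' = h"
    by blast
  then show ?thesis
  proof cases
    case 1
    then show ?thesis using \<open>f \<in> arcs F\<close> unfolding is_source_def by blast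
  next
    case 2
    then show ?thesis using assms(2-4) by metis
  qed
qed

theorem lemma5p5:
  fixes E :: "('a, 'b) dgraph" and sp :: "'a \<Rightarrow> 'b"
    and F :: "('v, 'e) dgraph" and \<phi>V :: "'v \<Rightarrow> 'a" and \<phi>E :: "'e \<Rightarrow> 'b dedge"
    and w :: 'v and p q :: "'v \<times> 'e list"
  assumes "wf_graph E" and "row_finite E" and "special_choice E sp"
    and "ext_rep_graph E sp F \<phi>V \<phi>E"
    and "w \<in> verts F" and "is_source F w"
    and "is_path F p" and "is_path F q"
    and "path_src p = w" and "path_src q = w"
  shows "path_rng F p = path_rng F q \<longleftrightarrow> p = q"
proof
  assume rng_eq: "path_rng F p = path_rng F q"
  obtain xs ys where p: "p = (w, xs)" and q: "q = (w, ys)"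
    using assms(9,10) unfolding path_src_def by (cases p, cases q) auto
  have "xs = ys"
    using path_from_source_eq_if_same_rng[OF ext_rep_graph_in_arc_unique[OF assms(4)] assms(6)]
      assms(7,8) rng_eq
    unfolding p q by blast
  then show "p = q" using p q by simp
qed simp

end
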